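(* Let $R$ be a $*$-ring. Then $R$ is strongly $J$-$*$-clean if and only if (1) $R$ is strongly $*$-clean, and (2) $R/M\cong\mathbb{Z}_2$ for all maximal ideals $M$ of $R$.
   Context: All rings are associative with identity. A $*$-ring is a ring $R$ with an involution $*$, i.e. a map $a\mapsto a^*$ with $(a+b)^*=a^*+b^*$, $(ab)^*=b^*a^*$, $(a^* )^*=a$. $U(R)$ denotes the group of units and $J(R)$ the Jacobson radical of $R$. A projection is an element $e$ with $e^2=e=e^*$. $R$ is strongly $J$-$*$-clean if every $a\in R$ can be written $a=e+u$ with $e$ a projection, $u\in J(R)$ and $ae=ea$. $R$ is strongly $*$-clean if every $a\in R$ can be written $a=e+u$ with $e$ a projection, $u\in U(R)$ and $eu=ue$. Maximal ideals are two-sided. *)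

theory Defs
  imports "HOL-Algebra.Algebra"
begin

definition star_ring :: "('a, 'b) ring_scheme \<Rightarrow> ('a \<Rightarrow> 'a) \<Rightarrow> bool" where
  "star_ring R s \<longleftrightarrow> ring R \<and>
     (\<forall>a\<in>carrier R. s a \<in> carrier R) \<and>
     (\<forall>a\<in>carrier R. \<forall>b\<in>carrier R. s (a \<oplus>\<^bsub>R\<^esub> b) = s a \<oplus>\<^bsub>R\<^esub> s b) \<and>
     (\<forall>a\<in>carrier R. \<forall>b\<in>carrier R. s (a \<otimes>\<^bsub>R\<^esub> b) = s b \<otimes>\<^bsub>R\<^esub> s a) \<and>
     (\<forall>a\<in>carrier R. s (s a) = a)"

definition projection :: "('a, 'b) ring_scheme \<Rightarrow> ('a \<Rightarrow> 'a) \<Rightarrow> 'a \<Rightarrow> bool" where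
  "projection R s e \<longleftrightarrow> e \<in> carrier R \<and> e \<otimes>\<^bsub>R\<^esub> e = e \<and> s e = e"

definition left_ideal :: "'a set \<Rightarrow> ('a, 'b) ring_scheme \<Rightarrow> bool" where
  "left_ideal I R \<longleftrightarrow> additive_subgroup I R \<and>
     (\<forall>r\<in>carrier R. \<forall>a\<in>I. r \<otimes>\<^bsub>R\<^esub> a \<in> I)"

definition maximal_left_ideal :: "'a set \<Rightarrow> ('a, 'b) ring_scheme \<Rightarrow> bool" where
  "maximal_left_ideal I R \<longleftrightarrow> left_ideal I R \<and> I \<noteq> carrier R \<and>
     (\<forall>J. left_ideal J R \<and> I \<subseteq> J \<longrightarrow> J = I \<or> J = carrier R)"

definition jacobson :: "('a, 'b) ring_scheme \<Rightarrow> 'a set" where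
  "jacobson R = carrier R \<inter> \<Inter>{I. maximal_left_ideal I R}"

definition strongly_J_star_clean :: "('a, 'b) ring_scheme \<Rightarrow> ('a \<Rightarrow> 'a) \<Rightarrow> bool" where
  "strongly_J_star_clean R s \<longleftrightarrow>
     (\<forall>a\<in>carrier R. \<exists>e u. projection R s e \<and> u \<in> jacobson R \<and>
        a = e \<oplus>\<^bsub>R\<^esub> u \<and> a \<otimes>\<^bsub>R\<^esub> e = e \<otimes>\<^bsub>R\<^esub> a)"

definition strongly_star_clean :: "('a, 'b) ring_scheme \<Rightarrow> ('a \<Rightarrow> 'a) \<Rightarrow> bool" where
  "strongly_star_clean R s \<longleftrightarrow>
     (\<forall>a\<in>carrier R. \<exists>e u. projection R s e \<and> u \<in> Units R \<and>
        a = e \<oplus>\<^bsub>R\<^esub> u \<and> e \<otimes>\<^bsub>R\<^esub> u = u \<otimes>\<^bsub>R\<^esub> e)"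

end

theory Submission
  imports Defs
begin

text \<open>
  Projections of a strongly *-clean ring are central: \<open>e + e r (1 - e)\<close> is idempotent,
  hence a projection, which forces \<open>e r (1 - e) = 0\<close>. Every element is then a central
  idempotent plus a unit, and in such a ring every maximal left ideal is two-sided; so the
  maximal ideals are the maximal left ideals and \<open>J(R)\<close> is their intersection. Finally
  \<open>R/M \<cong> \<int>\<^sub>2\<close> says exactly that each \<open>x\<close> lies in \<open>M\<close> or in \<open>1 + M\<close>.

  If \<open>a = e + j\<close> is strongly J-*-clean, then \<open>a = (1 - e) + ((2e - 1) + j)\<close> with
  \<open>(2e - 1)\<^sup>2 = 1\<close> is strongly *-clean, and \<open>e \<in> M\<close> or \<open>1 - e \<in> M\<close> gives the dichotomy
  modulo \<open>M\<close>. Conversely, if all \<open>R/M \<cong> \<int>\<^sub>2\<close>, then \<open>u - 1\<close> and \<open>2\<close> lie in every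
  maximal left ideal for each unit \<open>u\<close>, so \<open>e + u = (1 - e) + (u - 1 + 2e)\<close> with the
  second summand in \<open>J(R)\<close>.
\<close>

lemma two_element_ring_one_add_one:
  assumes "ring A" and "carrier A = {\<zero>\<^bsub>A\<^esub>, \<one>\<^bsub>A\<^esub>}"
  shows "\<one>\<^bsub>A\<^esub> \<oplus>\<^bsub>A\<^esub> \<one>\<^bsub>A\<^esub> = \<zero>\<^bsub>A\<^esub>"
proof -
  interpret A: ring A by fact
  have "\<one>\<^bsub>A\<^esub> \<oplus>\<^bsub>A\<^esub> \<one>\<^bsub>A\<^esub> \<in> {\<zero>\<^bsub>A\<^esub>, \<one>\<^bsub>A\<^esub>}"
    using A.a_closed[OF A.one_closed A.one_closed] unfolding assms(2) .
  moreover have "\<one>\<^bsub>A\<^esub> \<oplus>\<^bsub>A\<^esub> \<one>\<^bsub>A\<^esub> = \<one>\<^bsub>A\<^esub> \<Longrightarrow> \<one>\<^bsub>A\<^esub> = \<zero>\<^bsub>A\<^esub>"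
    by (metis A.add.l_cancel_one' A.one_closed)
  ultimately show ?thesis by fastforce
qed

lemma two_element_rings_iso:
  assumes A: "ring A" "carrier A = {\<zero>\<^bsub>A\<^esub>, \<one>\<^bsub>A\<^esub>}" "\<zero>\<^bsub>A\<^esub> \<noteq> \<one>\<^bsub>A\<^esub>"
    and B: "ring B" "carrier B = {\<zero>\<^bsub>B\<^esub>, \<one>\<^bsub>B\<^esub>}" "\<zero>\<^bsub>B\<^esub> \<noteq> \<one>\<^bsub>B\<^esub>"
  shows "A \<simeq> B"
proof -
  interpret A: ring A by fact
  interpret B: ring B by fact
  define h where "h x = (if x = \<zero>\<^bsub>A\<^esub> then \<zero>\<^bsub>B\<^esub> else \<one>\<^bsub>B\<^esub>)" for x
  have A01: "x = \<zero>\<^bsub>A\<^esub> \<or> x = \<one>\<^bsub>A\<^esub>" if "x \<in> carrier A" for x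
    using that A(2) by blast
  have A2: "\<one>\<^bsub>A\<^esub> \<oplus>\<^bsub>A\<^esub> \<one>\<^bsub>A\<^esub> = \<zero>\<^bsub>A\<^esub>" and B2: "\<one>\<^bsub>B\<^esub> \<oplus>\<^bsub>B\<^esub> \<one>\<^bsub>B\<^esub> = \<zero>\<^bsub>B\<^esub>"
    using two_element_ring_one_add_one A(1,2) B(1,2) by blast+
  have "h \<in> ring_iso A B"
  proof (rule ring_iso_memI)
    show "h x \<in> carrier B" for x by (simp add: h_def)
    show "h (x \<otimes>\<^bsub>A\<^esub> y) = h x \<otimes>\<^bsub>B\<^esub> h y" if "x \<in> carrier A" "y \<in> carrier A" for x y
      using A01[OF that(1)] A01[OF that(2)] A(3) by (elim disjE) (simp_all add: h_def)
    show "h (x \<oplus>\<^bsub>A\<^esub> y) = h x \<oplus>\<^bsub>B\<^esub> h y" if "x \<in> carrier A" "y \<in> carrier A" for x y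
      using A01[OF that(1)] A01[OF that(2)] A(3) A2 B2 by (elim disjE) (simp_all add: h_def)
    show "h \<one>\<^bsub>A\<^esub> = \<one>\<^bsub>B\<^esub>" using A(3) by (simp add: h_def)
    show "bij_betw h (carrier A) (carrier B)"
      unfolding bij_betw_def inj_on_def A(2) B(2) using A(3) B(3) by (auto simp: h_def insert_commute)
  qed
  thus ?thesis unfolding is_ring_iso_def by blast
qed

lemma zero_ZFact: "\<zero>\<^bsub>ZFact k\<^esub> = ZMod k 0"
  by (simp add: ZFact_def FactRing_def ZMod_def int.a_rcos_zero int.genideal_ideal int.genideal_zero)

lemma one_ZFact: "\<one>\<^bsub>ZFact k\<^esub> = ZMod k 1"
  by (simp add: ZFact_def FactRing_def ZMod_def)

lemma carrier_ZFact: "carrier (ZFact k) = range (ZMod k)"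
  by (auto simp: ZFact_def FactRing_def A_RCOSETS_defs ZMod_def a_r_coset_def)

lemma carrier_ZFact_2: "carrier (ZFact 2) = {\<zero>\<^bsub>ZFact 2\<^esub>, \<one>\<^bsub>ZFact 2\<^esub>}"
proof -
  have "ZMod 2 n \<in> {ZMod 2 0, ZMod 2 1}" for n
    using ZMod_eq_mod[of 2 n] by (cases "even n") auto
  thus ?thesis by (auto simp: carrier_ZFact zero_ZFact one_ZFact)
qed

lemma ZFact_2_zero_neq_one: "\<zero>\<^bsub>ZFact 2\<^esub> \<noteq> \<one>\<^bsub>ZFact 2\<^esub>"
  by (simp add: zero_ZFact one_ZFact ZMod_eq_mod)

lemma ring_iso_ZFact_2_iff:
  assumes "ring A"
  shows "A \<simeq> ZFact 2 \<longleftrightarrow> carrier A = {\<zero>\<^bsub>A\<^esub>, \<one>\<^bsub>A\<^esub>} \<and> \<zero>\<^bsub>A\<^esub> \<noteq> \<one>\<^bsub>A\<^esub>"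
proof
  interpret A: ring A by fact
  have Z2: "ring (ZFact 2)" using ZFact_is_cring cring.axioms(1) by blast
  assume "A \<simeq> ZFact 2"
  then obtain h where h: "h \<in> ring_iso A (ZFact 2)" unfolding is_ring_iso_def by blast
  have h01: "h \<zero>\<^bsub>A\<^esub> = \<zero>\<^bsub>ZFact 2\<^esub>" "h \<one>\<^bsub>A\<^esub> = \<one>\<^bsub>ZFact 2\<^esub>"
    using ring_hom_zero[of h A "ZFact 2"] h Z2 ring_iso_memE(4)[OF h] A.ring_axioms
    unfolding ring_iso_def by auto
  have inj: "inj_on h (carrier A)" and img: "h ` carrier A = carrier (ZFact 2)"
    using ring_iso_memE(5)[OF h] by (auto simp: bij_betw_def)
  have "x \<in> {\<zero>\<^bsub>A\<^esub>, \<one>\<^bsub>A\<^esub>}" if x: "x \<in> carrier A" for x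
  proof -
    have "h x \<in> carrier (ZFact 2)" using x img by blast
    hence "h x \<in> {h \<zero>\<^bsub>A\<^esub>, h \<one>\<^bsub>A\<^esub>}" unfolding carrier_ZFact_2 h01 .
    thus ?thesis using inj_onD[OF inj _ x A.zero_closed] inj_onD[OF inj _ x A.one_closed] by blast
  qed
  thus "carrier A = {\<zero>\<^bsub>A\<^esub>, \<one>\<^bsub>A\<^esub>} \<and> \<zero>\<^bsub>A\<^esub> \<noteq> \<one>\<^bsub>A\<^esub>"
    using h01 ZFact_2_zero_neq_one by auto
next
  assume "carrier A = {\<zero>\<^bsub>A\<^esub>, \<one>\<^bsub>A\<^esub>} \<and> \<zero>\<^bsub>A\<^esub> \<noteq> \<one>\<^bsub>A\<^esub>"
  thus "A \<simeq> ZFact 2"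
    using two_element_rings_iso assms ZFact_is_cring cring.axioms(1) carrier_ZFact_2
      ZFact_2_zero_neq_one by blast
qed

lemma (in ring) FactRing_iso_ZFact_2_iff:
  assumes "ideal M R"
  shows "R Quot M \<simeq> ZFact 2 \<longleftrightarrow> \<one> \<notin> M \<and> (\<forall>x\<in>carrier R. x \<in> M \<or> x \<ominus> \<one> \<in> M)"
proof -
  have cosets_eq: "M +> x = M +> y \<longleftrightarrow> x \<ominus> y \<in> M" if "x \<in> carrier R" "y \<in> carrier R" for x y
    using quotient_eq_iff_same_a_r_cos[OF assms that] by simp
  have zero: "\<zero>\<^bsub>R Quot M\<^esub> = M +> \<zero>"
    using a_rcos_zero[OF assms] additive_subgroup.zero_closed[OF ideal.axioms(1)[OF assms]]
    by (simp add: FactRing_def)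
  have one: "\<one>\<^bsub>R Quot M\<^esub> = M +> \<one>"
    by (simp add: FactRing_def)
  have carrier: "carrier (R Quot M) = (+>) M ` carrier R"
    by (auto simp: FactRing_def A_RCOSETS_defs a_r_coset_def)
  have "carrier (R Quot M) = {M +> \<zero>, M +> \<one>} \<longleftrightarrow> (\<forall>x\<in>carrier R. M +> x = M +> \<zero> \<or> M +> x = M +> \<one>)"
    unfolding carrier by blast
  also have "\<dots> \<longleftrightarrow> (\<forall>x\<in>carrier R. x \<in> M \<or> x \<ominus> \<one> \<in> M)"
    using cosets_eq by (simp add: a_minus_def)
  finally have "carrier (R Quot M) = {\<zero>\<^bsub>R Quot M\<^esub>, \<one>\<^bsub>R Quot M\<^esub>} \<longleftrightarrow> (\<forall>x\<in>carrier R. x \<in> M \<or> x \<ominus> \<one> \<in> M)"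
    unfolding zero one .
  moreover have "\<zero>\<^bsub>R Quot M\<^esub> \<noteq> \<one>\<^bsub>R Quot M\<^esub> \<longleftrightarrow> \<one> \<notin> M"
    using cosets_eq[of \<one> \<zero>] by (simp add: zero one a_minus_def) metis
  ultimately show ?thesis
    using ring_iso_ZFact_2_iff[OF ideal.quotient_is_ring[OF assms]] by blast
qed

definition centrally_clean :: "('a, 'b) ring_scheme \<Rightarrow> bool" where
  "centrally_clean R \<longleftrightarrow>
     (\<forall>x\<in>carrier R. \<exists>e u. e \<in> carrier R \<and> e \<otimes>\<^bsub>R\<^esub> e = e \<and>
        (\<forall>r\<in>carrier R. e \<otimes>\<^bsub>R\<^esub> r = r \<otimes>\<^bsub>R\<^esub> e) \<and> u \<in> Units R \<and> x = e \<oplus>\<^bsub>R\<^esub> u)"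

lemma (in maximalideal) one_notin: "\<one> \<notin> I"
  using one_imp_carrier I_notcarr by blast

context ring
begin

lemma left_idealI:
  assumes "L \<subseteq> carrier R" "\<zero> \<in> L"
    and "\<And>a b. a \<in> L \<Longrightarrow> b \<in> L \<Longrightarrow> a \<oplus> b \<in> L" "\<And>a. a \<in> L \<Longrightarrow> \<ominus> a \<in> L"
    and "\<And>r a. r \<in> carrier R \<Longrightarrow> a \<in> L \<Longrightarrow> r \<otimes> a \<in> L"
  shows "left_ideal L R"
proof -
  have "additive_subgroup L R"
    by (rule additive_subgroupI, rule subgroup.intro) (use assms in \<open>auto simp: a_inv_def[symmetric]\<close>)
  thus ?thesis unfolding left_ideal_def using assms(5) by blast
qed

lemma left_idealD:
  assumes "left_ideal L R"
  shows "L \<subseteq> carrier R" "\<zero> \<in> L"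
    and "\<And>a b. a \<in> L \<Longrightarrow> b \<in> L \<Longrightarrow> a \<oplus> b \<in> L" "\<And>a. a \<in> L \<Longrightarrow> \<ominus> a \<in> L"
    and "\<And>r a. r \<in> carrier R \<Longrightarrow> a \<in> L \<Longrightarrow> r \<otimes> a \<in> L"
  using assms unfolding left_ideal_def
  by (auto intro: additive_subgroup.a_Hcarr additive_subgroup.a_closed
      additive_subgroup.a_inv_closed additive_subgroup.zero_closed)

lemma left_ideal_minus:
  assumes "left_ideal L R" "a \<in> L" "b \<in> L" shows "a \<ominus> b \<in> L"
  using left_idealD[OF assms(1)] assms(2,3) by (simp add: a_minus_def)

lemma left_ideal_one_imp_carrier:
  assumes "left_ideal L R" "\<one> \<in> L" shows "L = carrier R"
  using left_idealD[OF assms(1)] assms(2) by (metis r_one subsetI subset_antisym)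

lemma left_ideal_Units_cancel:
  assumes "left_ideal L R" "u \<in> Units R" "x \<in> carrier R" "u \<otimes> x \<in> L"
  shows "x \<in> L"
proof -
  have "inv u \<otimes> (u \<otimes> x) = x"
    using m_assoc[OF Units_inv_closed Units_closed, OF assms(2,2,3)] assms(2,3)
    by (simp add: Units_l_inv)
  thus ?thesis using left_idealD(5)[OF assms(1) Units_inv_closed[OF assms(2)] assms(4)] by simp
qed

lemma ideal_imp_left_ideal: "ideal I R \<Longrightarrow> left_ideal I R"
  unfolding left_ideal_def by (meson ideal.axioms(1) ideal.I_l_closed)

lemma maximal_left_idealD:
  assumes "maximal_left_ideal L R"
  shows "left_ideal L R" "\<one> \<notin> L"
    and "\<And>J. left_ideal J R \<Longrightarrow> L \<subseteq> J \<Longrightarrow> J = L \<or> J = carrier R"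
  using assms left_ideal_one_imp_carrier unfolding maximal_left_ideal_def by blast+

lemma maximal_left_ideal_Units_notin:
  assumes "maximal_left_ideal L R" "u \<in> Units R" shows "u \<notin> L"
  using left_ideal_Units_cancel[of L u \<one>] maximal_left_idealD[OF assms(1)] assms(2) by auto

lemma left_ideal_add_left_multiples:
  assumes L: "left_ideal L R" and x: "x \<in> carrier R"
  shows "left_ideal {l \<oplus> b \<otimes> x | l b. l \<in> L \<and> b \<in> carrier R} R" (is "left_ideal ?N R")
proof (rule left_idealI)
  note LD = left_idealD[OF L]
  have NI: "l \<oplus> b \<otimes> x \<in> ?N" if "l \<in> L" "b \<in> carrier R" for l b
    using that by blast
  have NE: "\<exists>l b. l \<in> L \<and> l \<in> carrier R \<and> b \<in> carrier R \<and> a = l \<oplus> b \<otimes> x" if "a \<in> ?N" for a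
    using that LD(1) by blast
  show "?N \<subseteq> carrier R" using LD(1) x by auto
  show "\<zero> \<in> ?N" using NI[OF LD(2) zero_closed] x by simp
  show "a \<oplus> c \<in> ?N" if ac: "a \<in> ?N" "c \<in> ?N" for a c
  proof -
    obtain l1 b1 l2 b2 where lb: "l1 \<in> L" "b1 \<in> carrier R" "l2 \<in> L" "b2 \<in> carrier R"
      and "l1 \<in> carrier R" "l2 \<in> carrier R" "a = l1 \<oplus> b1 \<otimes> x" "c = l2 \<oplus> b2 \<otimes> x"
      using NE[OF ac(1)] NE[OF ac(2)] by blast
    hence "a \<oplus> c = (l1 \<oplus> l2) \<oplus> (b1 \<oplus> b2) \<otimes> x" using x by (algebra; simp add: a_ac)
    thus ?thesis using NI LD(3) lb by simp
  qed
  show "\<ominus> a \<in> ?N" if ac: "a \<in> ?N" for a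
  proof -
    obtain l b where lb: "l \<in> L" "b \<in> carrier R" and "l \<in> carrier R" "a = l \<oplus> b \<otimes> x"
      using NE[OF ac] by blast
    hence "\<ominus> a = \<ominus> l \<oplus> (\<ominus> b) \<otimes> x" using x by (algebra; simp add: a_ac)
    thus ?thesis using NI LD(4) lb by simp
  qed
  show "r \<otimes> a \<in> ?N" if ac: "r \<in> carrier R" "a \<in> ?N" for r a
  proof -
    obtain l b where lb: "l \<in> L" "b \<in> carrier R" and "l \<in> carrier R" "a = l \<oplus> b \<otimes> x"
      using NE[OF ac(2)] by blast
    hence "r \<otimes> a = r \<otimes> l \<oplus> (r \<otimes> b) \<otimes> x" using x ac(1) by (algebra; simp add: a_ac)
    thus ?thesis using NI LD(5) lb ac(1) by simp
  qed
qed

lemma zero_left_ideal: "left_ideal {\<zero>} R"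
  by (rule left_idealI) auto

lemma maximal_left_ideal_add_left_multiple:
  assumes L: "maximal_left_ideal L R" and x: "x \<in> carrier R" "x \<notin> L" and y: "y \<in> carrier R"
  shows "\<exists>l\<in>L. \<exists>b\<in>carrier R. y = l \<oplus> b \<otimes> x"
proof -
  let ?N = "{l \<oplus> b \<otimes> x | l b. l \<in> L \<and> b \<in> carrier R}"
  note LI = maximal_left_idealD(1)[OF L]
  have "L \<subseteq> ?N"
  proof
    fix l assume l: "l \<in> L"
    hence "l = l \<oplus> \<zero> \<otimes> x" using left_idealD(1)[OF LI] x by auto
    thus "l \<in> ?N" using l by blast
  qed
  moreover have "x = \<zero> \<oplus> \<one> \<otimes> x" using x by simp
  hence "x \<in> ?N" using left_idealD(2)[OF LI] by blast
  ultimately have "?N = carrier R"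
    using maximal_left_idealD(3)[OF L left_ideal_add_left_multiples[OF LI x(1)]] x by blast
  thus ?thesis using y by blast
qed

lemma maximal_left_ideal_central_idempotent:
  assumes L: "maximal_left_ideal L R" and e: "e \<in> carrier R" "e \<otimes> e = e"
    and central: "\<And>r. r \<in> carrier R \<Longrightarrow> e \<otimes> r = r \<otimes> e"
  shows "e \<in> L \<or> \<one> \<ominus> e \<in> L"
proof (cases "e \<in> L")
  case False
  note LD = left_idealD[OF maximal_left_idealD(1)[OF L]]
  obtain l b where lb: "l \<in> L" "b \<in> carrier R" "\<one> = l \<oplus> b \<otimes> e"
    using maximal_left_ideal_add_left_multiple[OF L e(1) False one_closed] by blast
  have l: "l \<in> carrier R" using LD(1) lb(1) by blast
  have one: "l \<oplus> e \<otimes> b = \<one>" using lb(3) central[OF lb(2)] by simp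
  have "(\<one> \<ominus> e) \<otimes> (l \<oplus> e \<otimes> b) = (\<one> \<ominus> e) \<otimes> l \<oplus> (e \<ominus> e \<otimes> e) \<otimes> b"
    using e(1) l lb(2) by (algebra; simp add: a_ac)
  hence "\<one> \<ominus> e = (\<one> \<ominus> e) \<otimes> l"
    unfolding one using e l lb(2) by (simp add: r_neg minus_eq)
  thus ?thesis using LD(5)[of "\<one> \<ominus> e" l] lb(1) e(1) by simp
qed simp

lemma left_ideal_Union_chain:
  assumes "C \<noteq> {}" "\<And>K. K \<in> C \<Longrightarrow> left_ideal K R"
    and chain: "\<And>A B. A \<in> C \<Longrightarrow> B \<in> C \<Longrightarrow> A \<subseteq> B \<or> B \<subseteq> A"
  shows "left_ideal (\<Union>C) R"
proof (rule left_idealI)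
  note D = left_idealD[OF assms(2)]
  show "\<Union>C \<subseteq> carrier R" using D(1) by blast
  show "\<zero> \<in> \<Union>C" using D(2) assms(1) by blast
  show "a \<oplus> b \<in> \<Union>C" if ab: "a \<in> \<Union>C" "b \<in> \<Union>C" for a b
  proof -
    obtain A B where AB: "A \<in> C" "B \<in> C" "a \<in> A" "b \<in> B" using ab by blast
    then consider "a \<in> B" | "b \<in> A" using chain by blast
    thus ?thesis using AB D(3) by cases blast+
  qed
  show "\<ominus> a \<in> \<Union>C" if "a \<in> \<Union>C" for a using that D(4) by blast
  show "r \<otimes> a \<in> \<Union>C" if "r \<in> carrier R" "a \<in> \<Union>C" for r a using that D(5) by blast
qed

lemma exists_maximal_left_ideal:
  assumes I: "left_ideal I R" and one: "\<one> \<notin> I"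
  shows "\<exists>L. maximal_left_ideal L R \<and> I \<subseteq> L"
proof -
  define S where "S = {K. left_ideal K R \<and> I \<subseteq> K \<and> \<one> \<notin> K}"
  have "\<exists>M\<in>S. \<forall>K\<in>S. M \<subseteq> K \<longrightarrow> K = M"
  proof (rule subset_Zorn_nonempty)
    show "S \<noteq> {}" using I one unfolding S_def by blast
  next
    fix C assume C: "C \<noteq> {}" "subset.chain S C"
    have CS: "C \<subseteq> S" and chain: "\<And>A B. A \<in> C \<Longrightarrow> B \<in> C \<Longrightarrow> A \<subseteq> B \<or> B \<subseteq> A"
      using C(2) unfolding subset_chain_def by blast+
    have "left_ideal (\<Union>C) R"
      using left_ideal_Union_chain[OF C(1) _ chain] CS unfolding S_def by blast
    moreover have "I \<subseteq> \<Union>C" using C(1) CS unfolding S_def by blast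
    moreover have "\<one> \<notin> \<Union>C" using CS unfolding S_def by blast
    ultimately show "\<Union>C \<in> S" unfolding S_def by blast
  qed
  then obtain M where "M \<in> S" and max: "\<And>K. K \<in> S \<Longrightarrow> M \<subseteq> K \<Longrightarrow> K = M" by blast
  hence M: "left_ideal M R" "I \<subseteq> M" "\<one> \<notin> M" unfolding S_def by blast+
  have "maximal_left_ideal M R"
    unfolding maximal_left_ideal_def
  proof (intro conjI allI impI)
    show "M \<noteq> carrier R" using M(3) by auto
    fix J assume J: "left_ideal J R \<and> M \<subseteq> J"
    show "J = M \<or> J = carrier R"
    proof (cases "\<one> \<in> J")
      case True thus ?thesis using left_ideal_one_imp_carrier J by blast
    next
      case False thus ?thesis using max[of J] J M(2) unfolding S_def by blast
    qed
  qed (rule M(1))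
  thus ?thesis using M(2) by blast
qed

lemma jacobson_closed: "j \<in> jacobson R \<Longrightarrow> j \<in> carrier R"
  unfolding jacobson_def by blast

lemma jacobson_subset_maximal_left_ideal:
  "maximal_left_ideal L R \<Longrightarrow> jacobson R \<subseteq> L"
  unfolding jacobson_def by blast

lemma jacobsonI:
  "j \<in> carrier R \<Longrightarrow> (\<And>L. maximal_left_ideal L R \<Longrightarrow> j \<in> L) \<Longrightarrow> j \<in> jacobson R"
  unfolding jacobson_def by blast

lemma jacobson_l_closed:
  assumes "j \<in> jacobson R" "r \<in> carrier R" shows "r \<otimes> j \<in> jacobson R"
proof (rule jacobsonI)
  show "r \<otimes> j \<in> carrier R" using assms jacobson_closed by simp
  show "r \<otimes> j \<in> L" if "maximal_left_ideal L R" for L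
    using left_idealD(5)[OF maximal_left_idealD(1)[OF that] assms(2)]
      jacobson_subset_maximal_left_ideal[OF that] assms(1) by blast
qed

lemma one_add_jacobson_left_inverse:
  assumes j: "j \<in> jacobson R" shows "\<exists>x\<in>carrier R. x \<otimes> (\<one> \<oplus> j) = \<one>"
proof (rule ccontr)
  assume no_inverse: "\<not> ?thesis"
  have jc: "j \<in> carrier R" using jacobson_closed[OF j] .
  define y where "y = \<one> \<oplus> j"
  have yc: "y \<in> carrier R" unfolding y_def using jc by simp
  define I where "I = {l \<oplus> b \<otimes> y | l b. l \<in> {\<zero>} \<and> b \<in> carrier R}"
  have "\<one> \<notin> I" using no_inverse yc unfolding I_def y_def by auto
  then obtain L where L: "maximal_left_ideal L R" "I \<subseteq> L"
    using exists_maximal_left_ideal left_ideal_add_left_multiples[OF zero_left_ideal yc]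
    unfolding I_def by blast
  have "y = \<zero> \<oplus> \<one> \<otimes> y" using yc by simp
  hence "y \<in> L" using L(2) unfolding I_def by blast
  hence "y \<ominus> j \<in> L"
    using jacobson_subset_maximal_left_ideal[OF L(1)] j
      left_ideal_minus[OF maximal_left_idealD(1)[OF L(1)]] by blast
  moreover have "y \<ominus> j = \<one>" unfolding y_def using jc by (algebra; simp add: a_ac)
  ultimately show False using maximal_left_idealD(2)[OF L(1)] by simp
qed

lemma one_add_jacobson_Units:
  assumes j: "j \<in> jacobson R" shows "\<one> \<oplus> j \<in> Units R"
proof -
  have jc: "j \<in> carrier R" using jacobson_closed[OF j] .
  obtain x where x: "x \<in> carrier R" "x \<otimes> (\<one> \<oplus> j) = \<one>"
    using one_add_jacobson_left_inverse[OF j] by blast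
  have "x = x \<otimes> (\<one> \<oplus> j) \<oplus> (\<ominus> x \<otimes> j)" using x(1) jc by (algebra; simp add: a_ac)
  hence x_eq: "x = \<one> \<oplus> (\<ominus> x \<otimes> j)" using x(2) by simp
  have "\<ominus> x \<otimes> j \<in> jacobson R" using jacobson_l_closed[OF j] x(1) by simp
  then obtain z where z: "z \<in> carrier R" "z \<otimes> x = \<one>"
    using one_add_jacobson_left_inverse x_eq by metis
  have "z = z \<otimes> (x \<otimes> (\<one> \<oplus> j))" using x(2) z(1) by simp
  also have "\<dots> = (z \<otimes> x) \<otimes> (\<one> \<oplus> j)" using x(1) z(1) jc by (simp add: m_assoc)
  also have "\<dots> = \<one> \<oplus> j" using z(2) jc by simp
  finally have "(\<one> \<oplus> j) \<otimes> x = \<one>" using z(2) by simp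
  thus ?thesis unfolding Units_def using x jc by blast
qed

text \<open>If \<open>x t \<notin> L\<close> for some \<open>x \<in> L\<close>, write \<open>t = l + b x t\<close> and split
  \<open>b x = f + v\<close> with \<open>f\<close> central idempotent and \<open>v\<close> a unit; either \<open>v \<in> L\<close> or
  \<open>v t \<in> L\<close>, both absurd.\<close>

lemma maximal_left_ideal_r_closed:
  assumes clean: "centrally_clean R" and L: "maximal_left_ideal L R"
    and x: "x \<in> L" and t: "t \<in> carrier R"
  shows "x \<otimes> t \<in> L"
proof (rule ccontr)
  assume xt: "x \<otimes> t \<notin> L"
  note LI = maximal_left_idealD(1)[OF L]
  note LD = left_idealD[OF LI]
  have xc: "x \<in> carrier R" using x LD(1) by blast
  obtain l b where lb: "l \<in> L" "b \<in> carrier R" "t = l \<oplus> b \<otimes> (x \<otimes> t)"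
    using maximal_left_ideal_add_left_multiple[OF L _ xt t] xc t by blast
  have l: "l \<in> carrier R" using lb(1) LD(1) by blast
  obtain f v where f: "f \<in> carrier R" "f \<otimes> f = f" "\<And>r. r \<in> carrier R \<Longrightarrow> f \<otimes> r = r \<otimes> f"
    and v: "v \<in> Units R" and bx: "b \<otimes> x = f \<oplus> v"
    using clean lb(2) xc unfolding centrally_clean_def by (metis m_closed)
  have vc: "v \<in> carrier R" using v by blast
  have bxL: "b \<otimes> x \<in> L" using LD(5)[OF lb(2) x] .
  consider "f \<in> L" | "\<one> \<ominus> f \<in> L"
    using maximal_left_ideal_central_idempotent[OF L f] by blast
  thus False
  proof cases
    case 1
    have "b \<otimes> x \<ominus> f = v" using bx f(1) vc by (algebra; simp add: a_ac)
    thus False using left_ideal_minus[OF LI bxL 1] maximal_left_ideal_Units_notin[OF L v] by simp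
  next
    case 2
    have "(\<one> \<ominus> f) \<otimes> t \<in> L" using LD(5)[OF t 2] f(3)[of t] t f(1)
      by (simp add: r_distr l_distr minus_eq r_minus l_minus)
    moreover have "v \<otimes> t = (\<one> \<ominus> f) \<otimes> t \<ominus> l"
    proof -
      have "(l \<oplus> b \<otimes> (x \<otimes> t)) \<ominus> l = b \<otimes> x \<otimes> t"
        using l lb(2) xc t by (algebra; simp add: a_ac)
      hence bxt: "b \<otimes> x \<otimes> t = t \<ominus> l" unfolding lb(3)[symmetric] by simp
      have "v \<otimes> t = b \<otimes> x \<otimes> t \<ominus> f \<otimes> t" using bx f(1) vc t by (algebra; simp add: a_ac)
      also have "\<dots> = (\<one> \<ominus> f) \<otimes> t \<ominus> l"
        unfolding bxt using f(1) t l by (algebra; simp add: a_ac)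
      finally show ?thesis .
    qed
    ultimately have "v \<otimes> t \<in> L" using left_ideal_minus[OF LI _ lb(1)] by simp
    hence "t \<in> L" using left_ideal_Units_cancel[OF LI v t] by blast
    thus False using xt LD(5)[OF xc] by blast
  qed
qed

lemma centrally_clean_maximal_left_ideal_is_maximalideal:
  assumes clean: "centrally_clean R" and L: "maximal_left_ideal L R"
  shows "maximalideal L R"
proof (rule maximalidealI)
  note LI = maximal_left_idealD(1)[OF L]
  show "ideal L R"
  proof (rule idealI)
    show "subgroup L (add_monoid R)"
      using LI unfolding left_ideal_def by (simp add: additive_subgroup.a_subgroup)
    show "x \<otimes> a \<in> L" if "a \<in> L" "x \<in> carrier R" for a x using left_idealD(5)[OF LI] that by blast
    show "a \<otimes> x \<in> L" if "a \<in> L" "x \<in> carrier R" for a x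
      using maximal_left_ideal_r_closed[OF clean L] that by blast
  qed (rule ring_axioms)
  show "carrier R \<noteq> L" using maximal_left_idealD(2)[OF L] by blast
  show "J = L \<or> J = carrier R" if "ideal J R" "L \<subseteq> J" "J \<subseteq> carrier R" for J
    using maximal_left_idealD(3)[OF L] ideal_imp_left_ideal that by blast
qed

lemma centrally_clean_maximalideal_is_maximal_left_ideal:
  assumes clean: "centrally_clean R" and M: "maximalideal M R"
  shows "maximal_left_ideal M R"
proof -
  interpret M: maximalideal M R by (rule M)
  obtain L where L: "maximal_left_ideal L R" "M \<subseteq> L"
    using exists_maximal_left_ideal[OF ideal_imp_left_ideal[OF M.is_ideal] M.one_notin] by blast
  have "L = M"
    using M.I_maximal[OF maximalideal.axioms(1) L(2)]
      centrally_clean_maximal_left_ideal_is_maximalideal[OF clean L(1)]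
      maximal_left_idealD(2)[OF L(1)] left_idealD(1)[OF maximal_left_idealD(1)[OF L(1)]]
    by blast
  thus ?thesis using L(1) by simp
qed

lemma jacobson_a_closed:
  assumes "i \<in> jacobson R" "j \<in> jacobson R" shows "i \<oplus> j \<in> jacobson R"
proof (rule jacobsonI)
  show "i \<oplus> j \<in> carrier R" using assms jacobson_closed by simp
  show "i \<oplus> j \<in> L" if "maximal_left_ideal L R" for L
    using left_idealD(3)[OF maximal_left_idealD(1)[OF that]]
      jacobson_subset_maximal_left_ideal[OF that] assms by blast
qed

context
  assumes mod_two: "\<And>L x. maximal_left_ideal L R \<Longrightarrow> x \<in> carrier R \<Longrightarrow> x \<in> L \<or> x \<ominus> \<one> \<in> L"
begin

lemma one_add_one_jacobson: "\<one> \<oplus> \<one> \<in> jacobson R"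
proof (rule jacobsonI)
  show "\<one> \<oplus> \<one> \<in> L" if L: "maximal_left_ideal L R" for L
  proof -
    have "(\<one> \<oplus> \<one>) \<ominus> \<one> = \<one>" by (algebra; simp add: a_ac)
    thus ?thesis using mod_two[OF L, of "\<one> \<oplus> \<one>"] maximal_left_idealD(2)[OF L] by auto
  qed
qed simp

lemma Units_minus_one_jacobson:
  assumes u: "u \<in> Units R" shows "u \<ominus> \<one> \<in> jacobson R"
  using mod_two maximal_left_ideal_Units_notin[OF _ u] u
  by (intro jacobsonI) (auto simp: Units_closed)

end

context
  fixes s :: "'a \<Rightarrow> 'a"
  assumes star: "star_ring R s"
begin

lemma star_closed: "a \<in> carrier R \<Longrightarrow> s a \<in> carrier R"
  and star_add: "a \<in> carrier R \<Longrightarrow> b \<in> carrier R \<Longrightarrow> s (a \<oplus> b) = s a \<oplus> s b"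
  and star_mult: "a \<in> carrier R \<Longrightarrow> b \<in> carrier R \<Longrightarrow> s (a \<otimes> b) = s b \<otimes> s a"
  and star_star: "a \<in> carrier R \<Longrightarrow> s (s a) = a"
  using star unfolding star_ring_def by auto

lemma star_one: "s \<one> = \<one>"
proof -
  have "s \<one> = s \<one> \<otimes> s (s \<one>)" using star_star[of \<one>] star_closed[of \<one>] by simp
  also have "\<dots> = s (s \<one> \<otimes> \<one>)" using star_mult[of "s \<one>" \<one>] star_closed[of \<one>] by simp
  also have "\<dots> = \<one>" using star_star[of \<one>] star_closed[of \<one>] by simp
  finally show ?thesis .
qed

lemma star_zero: "s \<zero> = \<zero>"
proof -
  have "s \<zero> \<oplus> s \<zero> = s \<zero> \<oplus> \<zero>" using star_add[of \<zero> \<zero>] star_closed[of \<zero>] by simp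
  thus ?thesis using star_closed[of \<zero>] by (metis zero_closed add.l_cancel)
qed

lemma star_a_inv: "a \<in> carrier R \<Longrightarrow> s (\<ominus> a) = \<ominus> s a"
  using star_add[of "\<ominus> a" a] star_zero star_closed
  by (metis a_inv_closed add.inv_equality l_neg)

lemma star_one_minus: "a \<in> carrier R \<Longrightarrow> s (\<one> \<ominus> a) = \<one> \<ominus> s a"
  using star_add star_a_inv star_one by (simp add: a_minus_def)

lemma projectionD: "projection R s e \<Longrightarrow> e \<in> carrier R \<and> e \<otimes> e = e \<and> s e = e"
  unfolding projection_def by blast

lemma projection_one_minus:
  assumes "projection R s e" shows "projection R s (\<one> \<ominus> e)"
proof -
  have e: "e \<in> carrier R" "e \<otimes> e = e" "s e = e" using projectionD[OF assms] by auto
  have "(\<one> \<ominus> e) \<otimes> (\<one> \<ominus> e) = \<one> \<ominus> e \<ominus> e \<oplus> e \<otimes> e" using e by (algebra; simp add: a_ac)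
  also have "\<dots> = \<one> \<ominus> e" using e by (algebra; simp add: a_ac)
  finally show ?thesis unfolding projection_def using e star_one_minus by simp
qed

context
  assumes sc: "strongly_star_clean R s"
begin

text \<open>If \<open>e = f + u\<close> with \<open>f\<close> a projection commuting with the unit \<open>u\<close>, then \<open>u\<close>
  annihilates both \<open>e f\<close> and \<open>1 - e - f\<close>, so \<open>e = 1 - f\<close>.\<close>

lemma idempotent_is_projection:
  assumes e: "e \<in> carrier R" "e \<otimes> e = e"
  shows "projection R s e"
proof -
  obtain f u where f: "projection R s f" and u: "u \<in> Units R" and efu: "e = f \<oplus> u"
    and fu: "f \<otimes> u = u \<otimes> f"
    using sc e unfolding strongly_star_clean_def by blast
  have f1: "f \<in> carrier R" "f \<otimes> f = f" "s f = f" using projectionD[OF f] by auto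
  have uc: "u \<in> carrier R" using u by auto
  have u_eq: "u = e \<ominus> f" using efu f1 uc by (algebra; simp add: a_ac)
  have "f \<otimes> e = f \<oplus> f \<otimes> u" using efu f1 uc by (simp add: r_distr)
  also have "\<dots> = e \<otimes> f" using efu fu f1 uc by (simp add: l_distr)
  finally have fe: "f \<otimes> e = e \<otimes> f" .
  have "u \<otimes> (e \<otimes> f) = e \<otimes> e \<otimes> f \<ominus> f \<otimes> e \<otimes> f"
    unfolding u_eq using e(1) f1(1) by (algebra; simp add: a_ac)
  also have "\<dots> = \<zero>" using e f1 fe by (metis m_assoc r_neg minus_eq m_closed)
  finally have ef: "e \<otimes> f = \<zero>"
    using Units_l_cancel[OF u, of "e \<otimes> f" \<zero>] e f1 uc by simp
  have fe0: "f \<otimes> e = \<zero>" using fe ef by simp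
  have "u \<otimes> (\<one> \<ominus> e \<ominus> f) = e \<ominus> e \<otimes> e \<ominus> e \<otimes> f \<ominus> f \<oplus> f \<otimes> e \<oplus> f \<otimes> f"
    unfolding u_eq using e(1) f1(1) by (algebra; simp add: a_ac)
  also have "\<dots> = e \<ominus> e \<ominus> \<zero> \<ominus> f \<oplus> \<zero> \<oplus> f" using e f1 ef fe0 by simp
  also have "\<dots> = \<zero>" using e(1) f1(1) by (algebra; simp add: a_ac)
  finally have "\<one> \<ominus> e \<ominus> f = \<zero>"
    using Units_l_cancel[OF u, of "\<one> \<ominus> e \<ominus> f" \<zero>] e f1 uc by simp
  moreover have "e = (\<one> \<ominus> f) \<ominus> (\<one> \<ominus> e \<ominus> f)" using e(1) f1(1) by (algebra; simp add: a_ac)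
  ultimately have "e = \<one> \<ominus> f" using f1(1) by (simp add: a_minus_def)
  thus ?thesis using projection_one_minus[OF f] by simp
qed

lemma projection_mult_one_minus:
  assumes e: "projection R s e" and r: "r \<in> carrier R"
  shows "e \<otimes> r \<otimes> (\<one> \<ominus> e) = \<zero>"
proof -
  have E: "e \<in> carrier R" "e \<otimes> e = e" "s e = e" using projectionD[OF e] by auto
  define c where "c = e \<otimes> r \<otimes> (\<one> \<ominus> e)"
  have cc: "c \<in> carrier R" unfolding c_def using E r by simp
  have "e \<otimes> c = (e \<otimes> e) \<otimes> r \<otimes> (\<one> \<ominus> e)" unfolding c_def using E(1) r by (algebra; simp add: a_ac)
  hence ec: "e \<otimes> c = c" using E unfolding c_def by simp
  have "c \<otimes> e = e \<otimes> r \<otimes> (e \<ominus> e \<otimes> e)" unfolding c_def using E(1) r by (algebra; simp add: a_ac)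
  hence ce: "c \<otimes> e = \<zero>" using E r by (simp add: r_neg minus_eq)
  have "c \<otimes> c = (c \<otimes> e) \<otimes> r \<otimes> (\<one> \<ominus> e)" unfolding c_def using E(1) r by (algebra; simp add: a_ac)
  hence cc2: "c \<otimes> c = \<zero>" using ce r E by simp
  have "(e \<oplus> c) \<otimes> (e \<oplus> c) = e \<otimes> e \<oplus> e \<otimes> c \<oplus> c \<otimes> e \<oplus> c \<otimes> c"
    using E(1) cc by (algebra; simp add: a_ac)
  also have "\<dots> = e \<oplus> c" using E ec ce cc2 cc by simp
  finally have "s (e \<oplus> c) = e \<oplus> c"
    using projectionD[OF idempotent_is_projection[of "e \<oplus> c"]] E cc by simp
  hence sc1: "s c = c" using star_add[of e c] star_closed[of c] E cc by (metis add.l_cancel)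
  have "s c = (\<one> \<ominus> e) \<otimes> (s r \<otimes> e)"
    unfolding c_def using star_mult star_closed star_one_minus E r by simp
  hence "e \<otimes> c = (e \<otimes> (\<one> \<ominus> e)) \<otimes> (s r \<otimes> e)"
    using sc1 E star_closed r by (simp add: m_assoc)
  also have "e \<otimes> (\<one> \<ominus> e) = e \<ominus> e \<otimes> e" using E(1) by (algebra; simp add: a_ac)
  finally have "e \<otimes> c = \<zero>" using E star_closed r by (simp add: r_neg minus_eq)
  thus ?thesis using ec c_def by simp
qed

lemma projection_central:
  assumes e: "projection R s e" and r: "r \<in> carrier R"
  shows "e \<otimes> r = r \<otimes> e"
proof -
  have E: "e \<in> carrier R" using projectionD[OF e] by blast
  have "e \<otimes> r = e \<otimes> r \<otimes> (\<one> \<ominus> e) \<oplus> e \<otimes> r \<otimes> e" using E r by (algebra; simp add: a_ac)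
  also have "\<dots> = e \<otimes> r \<otimes> e" using projection_mult_one_minus[OF e r] E r by simp
  also have "\<dots> = r \<otimes> e \<ominus> (\<one> \<ominus> e) \<otimes> r \<otimes> (\<one> \<ominus> (\<one> \<ominus> e))" using E r by (algebra; simp add: a_ac)
  also have "\<dots> = r \<otimes> e"
    using projection_mult_one_minus[OF projection_one_minus[OF e] r] E r by (simp add: minus_eq)
  finally show ?thesis .
qed

lemma strongly_star_clean_centrally_clean: "centrally_clean R"
  unfolding centrally_clean_def
proof
  fix x assume "x \<in> carrier R"
  then obtain e u where "projection R s e" "u \<in> Units R" "x = e \<oplus> u"
    using sc unfolding strongly_star_clean_def by blast
  thus "\<exists>e u. e \<in> carrier R \<and> e \<otimes> e = e \<and> (\<forall>r\<in>carrier R. e \<otimes> r = r \<otimes> e) \<and>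
      u \<in> Units R \<and> x = e \<oplus> u"
    using projectionD projection_central by blast
qed

end

lemma strongly_J_star_clean_imp_strongly_star_clean:
  assumes sj: "strongly_J_star_clean R s"
  shows "strongly_star_clean R s"
  unfolding strongly_star_clean_def
proof
  fix a assume a: "a \<in> carrier R"
  obtain e j where e: "projection R s e" and j: "j \<in> jacobson R" and a_eq: "a = e \<oplus> j"
    and ae: "a \<otimes> e = e \<otimes> a" using sj a unfolding strongly_J_star_clean_def by blast
  have E: "e \<in> carrier R" "e \<otimes> e = e" using projectionD[OF e] by auto
  have jc: "j \<in> carrier R" using jacobson_closed[OF j] .
  have "e \<oplus> j \<otimes> e = e \<oplus> e \<otimes> j"
    using ae E jc unfolding a_eq by (simp add: l_distr r_distr)
  hence ej: "e \<otimes> j = j \<otimes> e" using E jc by (metis m_closed add.l_cancel)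
  define w where "w = e \<oplus> e \<ominus> \<one>"
  have wc: "w \<in> carrier R" unfolding w_def using E by simp
  have "w \<otimes> w = (e \<otimes> e \<oplus> e \<otimes> e \<oplus> e \<otimes> e \<oplus> e \<otimes> e) \<ominus> (e \<oplus> e \<oplus> e \<oplus> e) \<oplus> \<one>"
    unfolding w_def using E(1) by (algebra; simp add: a_ac)
  also have "\<dots> = \<one>" unfolding E(2) using E(1) by (algebra; simp add: a_ac)
  finally have ww: "w \<otimes> w = \<one>" .
  hence w_unit: "w \<in> Units R" unfolding Units_def using wc by blast
  have "w \<otimes> (\<one> \<oplus> w \<otimes> j) = w \<oplus> (w \<otimes> w) \<otimes> j" using wc jc by (algebra; simp add: a_ac)
  also have "\<dots> = w \<oplus> j" using ww jc by simp
  finally have "w \<oplus> j \<in> Units R"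
    using one_add_jacobson_Units[OF jacobson_l_closed[OF j wc]] w_unit Units_m_closed by metis
  moreover have "a = (\<one> \<ominus> e) \<oplus> (w \<oplus> j)"
    unfolding a_eq w_def using E(1) jc by (algebra; simp add: a_ac)
  moreover have "(\<one> \<ominus> e) \<otimes> (w \<oplus> j) = (w \<oplus> j) \<otimes> (\<one> \<ominus> e)"
  proof -
    have "(\<one> \<ominus> e) \<otimes> (w \<oplus> j) = (\<one> \<ominus> e) \<otimes> w \<oplus> (j \<ominus> e \<otimes> j)"
      using E(1) wc jc by (algebra; simp add: a_ac)
    moreover have "(w \<oplus> j) \<otimes> (\<one> \<ominus> e) = w \<otimes> (\<one> \<ominus> e) \<oplus> (j \<ominus> j \<otimes> e)"
      using E(1) wc jc by (algebra; simp add: a_ac)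
    moreover have "(\<one> \<ominus> e) \<otimes> w = w \<otimes> (\<one> \<ominus> e)"
      unfolding w_def using E(1) by (algebra; simp add: a_ac)
    ultimately show ?thesis using ej by simp
  qed
  ultimately show "\<exists>e u. projection R s e \<and> u \<in> Units R \<and> a = e \<oplus> u \<and> e \<otimes> u = u \<otimes> e"
    using projection_one_minus[OF e] by blast
qed

lemma strongly_J_star_clean_maximalideal_mod_two:
  assumes sj: "strongly_J_star_clean R s" and M: "maximalideal M R" and x: "x \<in> carrier R"
  shows "x \<in> M \<or> x \<ominus> \<one> \<in> M"
proof -
  have sc: "strongly_star_clean R s"
    using strongly_J_star_clean_imp_strongly_star_clean[OF sj] .
  have M_maximal_left: "maximal_left_ideal M R"
    using centrally_clean_maximalideal_is_maximal_left_ideal[OF strongly_star_clean_centrally_clean[OF sc] M] .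
  note MD = left_idealD[OF maximal_left_idealD(1)[OF M_maximal_left]]
  obtain e j where e: "projection R s e" and j: "j \<in> jacobson R" and x_eq: "x = e \<oplus> j"
    using sj x unfolding strongly_J_star_clean_def by blast
  have E: "e \<in> carrier R" "e \<otimes> e = e" using projectionD[OF e] by auto
  have jc: "j \<in> carrier R" using jacobson_closed[OF j] .
  have jM: "j \<in> M" using jacobson_subset_maximal_left_ideal[OF M_maximal_left] j by blast
  consider "e \<in> M" | "\<one> \<ominus> e \<in> M"
    using maximal_left_ideal_central_idempotent[OF M_maximal_left E] projection_central[OF sc e] by blast
  thus ?thesis
  proof cases
    case 1
    thus ?thesis using MD(3)[OF 1 jM] x_eq by simp
  next
    case 2
    have "x \<ominus> \<one> = j \<ominus> (\<one> \<ominus> e)" unfolding x_eq using E(1) jc by (algebra; simp add: a_ac)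
    thus ?thesis using left_ideal_minus[OF maximal_left_idealD(1)[OF M_maximal_left] jM 2] by simp
  qed
qed

lemma strongly_star_clean_mod_two_imp_strongly_J_star_clean:
  assumes sc: "strongly_star_clean R s"
    and mod_two: "\<And>M x. maximalideal M R \<Longrightarrow> x \<in> carrier R \<Longrightarrow> x \<in> M \<or> x \<ominus> \<one> \<in> M"
  shows "strongly_J_star_clean R s"
  unfolding strongly_J_star_clean_def
proof
  have mod_two_left: "x \<in> L \<or> x \<ominus> \<one> \<in> L"
    if "maximal_left_ideal L R" "x \<in> carrier R" for L x
    using mod_two centrally_clean_maximal_left_ideal_is_maximalideal
      strongly_star_clean_centrally_clean[OF sc] that by blast
  fix a assume a: "a \<in> carrier R"
  obtain e u where e: "projection R s e" and u: "u \<in> Units R" and a_eq: "a = e \<oplus> u"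
    using sc a unfolding strongly_star_clean_def by blast
  have E: "e \<in> carrier R" using projectionD[OF e] by blast
  have "e \<oplus> e \<in> jacobson R"
    using jacobson_l_closed[OF one_add_one_jacobson[OF mod_two_left] E] E by (simp add: r_distr)
  hence "(u \<ominus> \<one>) \<oplus> (e \<oplus> e) \<in> jacobson R"
    using jacobson_a_closed Units_minus_one_jacobson[OF mod_two_left u] by blast
  moreover have "a = (\<one> \<ominus> e) \<oplus> ((u \<ominus> \<one>) \<oplus> (e \<oplus> e))"
    unfolding a_eq using E Units_closed[OF u] by (algebra; simp add: a_ac)
  moreover have "a \<otimes> (\<one> \<ominus> e) = (\<one> \<ominus> e) \<otimes> a"
    using projection_central[OF sc projection_one_minus[OF e] a] by simp
  ultimately show "\<exists>e u. projection R s e \<and> u \<in> jacobson R \<and> a = e \<oplus> u \<and> a \<otimes> e = e \<otimes> a"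
    using projection_one_minus[OF e] by blast
qed

lemma strongly_J_star_clean_iff:
  "strongly_J_star_clean R s \<longleftrightarrow>
     strongly_star_clean R s \<and> (\<forall>M. maximalideal M R \<longrightarrow> R Quot M \<simeq> ZFact 2)"
proof -
  have "R Quot M \<simeq> ZFact 2 \<longleftrightarrow> (\<forall>x\<in>carrier R. x \<in> M \<or> x \<ominus> \<one> \<in> M)"
    if "maximalideal M R" for M
    using FactRing_iso_ZFact_2_iff[OF maximalideal.axioms(1)] maximalideal.one_notin that by blast
  thus ?thesis
    using strongly_J_star_clean_imp_strongly_star_clean
      strongly_J_star_clean_maximalideal_mod_two
      strongly_star_clean_mod_two_imp_strongly_J_star_clean by blast
qed

end

end

theorem proposition2p4:
  fixes R :: "('a, 'b) ring_scheme" and s :: "'a \<Rightarrow> 'a"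
  assumes "star_ring R s"
  shows "strongly_J_star_clean R s \<longleftrightarrow>
           strongly_star_clean R s \<and>
           (\<forall>M. maximalideal M R \<longrightarrow> R Quot M \<simeq> ZFact 2)"
  using ring.strongly_J_star_clean_iff[of R s] assms unfolding star_ring_def by blast

end
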